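(* The equation $$p^{\alpha-2}(p^2-1)=q^{\beta-2}(q^2-1)$$ in integers $\alpha,\beta$ and primes $p<q$ has only finitely many solutions $(p,\alpha,q,\beta)$, namely exactly $(2,5,3,3)$, $(2,5,5,2)$, $(2,6,7,2)$, $(3,3,5,2)$ and $(5,3,11,2)$. *)

theory Defs
  imports Complex_Main "HOL-Computational_Algebra.Primes"
begin

end

theory Submission
  imports Defs
begin

(* A negative exponent is impossible: clearing denominators would make p divide q^m (p^2 - 1).
   So the equation is p^a (p^2 - 1) = q^b (q^2 - 1) in naturals. If b > 0, then q divides
   p^2 - 1 = (p - 1)(p + 1), so q = p + 1, i.e. (p, q) = (2, 3), and unique factorisation of
   2^a * 3 = 3^b * 8 gives a = 3, b = 1. If b = 0, then p^a (p^2 - 1) = (q - 1)(q + 1).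
   For p = 2 and q = 2r + 1 this reads 3 * 2^(a-2) = r (r + 1), whose odd factor divides 3.
   For odd p, the prime power p^a divides q - e for a sign e, so q = k p^a + e and
   k (k p^a + 2e) = p^2 - 1; comparing sizes forces a = 1, and then k = 2 and p = 4 + e. *)

lemma distinct_prime_dvd_power_mult_iff:
  fixes p q :: nat
  assumes "prime p" "prime q" "p \<noteq> q"
  shows "p dvd q ^ n * m \<longleftrightarrow> p dvd m"
  using assms by (metis prime_dvd_mult_iff prime_dvd_power_nat primes_dvd_imp_eq)

lemma prime_not_dvd_square_minus_one:
  fixes p :: nat
  assumes "prime p"
  shows "\<not> p dvd p\<^sup>2 - 1"
proof
  assume "p dvd p\<^sup>2 - 1"
  moreover have "p dvd p\<^sup>2" by (simp add: power2_eq_square)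
  ultimately have "p dvd 1" using assms by (metis dvd_diffD1 one_le_power prime_ge_1_nat)
  then show False using assms not_prime_unit by blast
qed

lemma of_nat_square_minus_one:
  assumes "n > 0"
  shows "(of_nat (n\<^sup>2 - 1) :: 'a::ring_1) = (of_nat n)\<^sup>2 - 1"
  using assms by (simp add: Suc_le_eq)

lemma distinct_prime_powers_mult_inject:
  fixes p q :: nat
  assumes "prime p" "prime q" "p \<noteq> q" and eq: "p ^ a * q ^ b = p ^ c * q ^ d"
  shows "a = c \<and> b = d"
proof -
  have "multiplicity r (p ^ a * q ^ b) = multiplicity r (p ^ c * q ^ d)" for r
    using eq by simp
  from this[of p] this[of q] show ?thesis
    using assms(1-3) by (simp add: prime_elem_multiplicity_mult_distrib multiplicity_distinct_prime_power
        prime_gt_0_nat prime_imp_prime_elem)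
qed

lemma powi_equation_exponent_nonneg:
  fixes p q :: nat and a b :: int
  assumes p: "prime p" and q: "prime q" and "p \<noteq> q"
    and eq: "real p powi a * ((real p)\<^sup>2 - 1) = real q powi b * ((real q)\<^sup>2 - 1)"
  shows "a \<ge> 0"
proof (rule ccontr)
  assume "\<not> a \<ge> 0"
  define N B B' where "N = nat (- a)" and "B = nat b" and "B' = nat (- b)"
  have "N > 0" using \<open>\<not> a \<ge> 0\<close> by (simp add: N_def)
  have p0: "real p > 0" and q0: "real q > 0" using p q by (simp_all add: prime_gt_0_nat)
  have pa: "real p powi a = 1 / real p ^ N"
    using \<open>\<not> a \<ge> 0\<close> by (simp add: N_def power_int_def power_inverse inverse_eq_divide power_divide)
  have qb: "real q powi b = real q ^ B / real q ^ B'"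
    by (simp add: B_def B'_def power_int_def power_inverse inverse_eq_divide power_divide)
  have "real q ^ B' * ((real p)\<^sup>2 - 1) = real p ^ N * real q ^ B * ((real q)\<^sup>2 - 1)"
    using eq p0 q0 unfolding pa qb by (simp add: field_simps)
  then have "real (q ^ B' * (p\<^sup>2 - 1)) = real (p ^ N * (q ^ B * (q\<^sup>2 - 1)))"
    using of_nat_square_minus_one[OF prime_gt_0_nat[OF p], where 'a=real]
      of_nat_square_minus_one[OF prime_gt_0_nat[OF q], where 'a=real]
    by simp
  then have "q ^ B' * (p\<^sup>2 - 1) = p ^ N * (q ^ B * (q\<^sup>2 - 1))"
    by (simp only: of_nat_eq_iff)
  then have "p dvd q ^ B' * (p\<^sup>2 - 1)" using \<open>N > 0\<close> by simp
  then show False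
    using distinct_prime_dvd_power_mult_iff[OF p q \<open>p \<noteq> q\<close>] prime_not_dvd_square_minus_one[OF p]
    by simp
qed

lemma larger_prime_dvd_square_minus_one:
  fixes p q :: nat
  assumes p: "prime p" and q: "prime q" and "p < q" and dvd: "q dvd p\<^sup>2 - 1"
  shows "p = 2 \<and> q = 3"
proof -
  have "p\<^sup>2 - 1 = (p - 1) * (p + 1)" by (simp add: power2_eq_square algebra_simps)
  moreover have "\<not> q dvd p - 1"
  proof
    assume "q dvd p - 1"
    then have "q \<le> p - 1" using prime_gt_1_nat[OF p] by (intro dvd_imp_le) auto
    then show False using \<open>p < q\<close> by simp
  qed
  ultimately have "q dvd p + 1" using dvd q prime_dvd_mult_iff by metis
  then have "q = p + 1" using \<open>p < q\<close> by (auto dest: dvd_imp_le)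
  moreover have "p = 2"
  proof (rule ccontr)
    assume "p \<noteq> 2"
    then have "odd p" using p prime_odd_nat prime_ge_2_nat[OF p] by simp
    then have "even q" using \<open>q = p + 1\<close> by simp
    then show False using q \<open>p < q\<close> prime_odd_nat prime_ge_2_nat[OF p] by simp
  qed
  ultimately show ?thesis by simp
qed

lemma three_times_power_of_two_eq_pronic:
  fixes r c :: nat
  assumes eq: "3 * 2 ^ c = r * (r + 1)"
  shows "(r = 2 \<and> c = 1) \<or> (r = 3 \<and> c = 2)"
proof -
  have odd_factor: "d = 1 \<or> d = 3" if "odd d" "d dvd r * (r + 1)" for d
  proof -
    have "coprime d (2 ^ c)" using \<open>odd d\<close> by simp
    then have "d dvd 3" using that(2) unfolding eq[symmetric] by (simp add: coprime_dvd_mult_left_iff)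
    then show ?thesis using prime_nat_iff[of 3] by simp
  qed
  have "2 ^ c \<ge> (1::nat)" by simp
  show ?thesis
  proof (cases "even r")
    case True
    then have "r + 1 = 1 \<or> r + 1 = 3" using odd_factor[OF _ dvd_triv_right[of "r + 1" r]] by simp
    moreover have "r \<noteq> 0" using eq by (intro notI) simp
    ultimately have "r = 2" by auto
    then have "(2::nat) ^ c = 2 ^ 1" using eq by simp
    then have "c = 1" by (simp only: power_inject_exp)
    with \<open>r = 2\<close> show ?thesis by simp
  next
    case False
    then have "r = 1 \<or> r = 3" using odd_factor[OF _ dvd_triv_left[of r "r + 1"]] by simp
    moreover have "r \<noteq> 1" using eq \<open>2 ^ c \<ge> 1\<close> by (intro notI) simp
    ultimately have "r = 3" by auto
    then have "(2::nat) ^ c = 2 ^ 2" using eq by simp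
    then have "c = 2" by (simp only: power_inject_exp)
    with \<open>r = 3\<close> show ?thesis by simp
  qed
qed

lemma power_of_two_times_three_eq_square_minus_one:
  fixes a q :: nat
  assumes "odd q" and eq: "2 ^ a * 3 = q\<^sup>2 - 1"
  shows "(a = 3 \<and> q = 5) \<or> (a = 4 \<and> q = 7)"
proof -
  obtain r where q: "q = 2 * r + 1" using \<open>odd q\<close> by (rule oddE)
  then have eq4: "2 ^ a * 3 = 4 * (r * (r + 1))"
    using eq by (simp add: power2_eq_square algebra_simps)
  have "a \<ge> 2"
  proof (rule ccontr)
    assume "\<not> a \<ge> 2"
    then have "a = 0 \<or> a = 1" by auto
    then show False using eq4 by auto presburger+
  qed
  then obtain c where "a = c + 2" using le_Suc_ex by (metis add.commute)
  then have "3 * 2 ^ c = r * (r + 1)" using eq4 by (simp add: power_add)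
  then have "(r = 2 \<and> c = 1) \<or> (r = 3 \<and> c = 2)" by (rule three_times_power_of_two_eq_pronic)
  then show ?thesis using q \<open>a = c + 2\<close> by auto
qed

lemma prime_power_dvd_pred_or_succ:
  fixes p x :: int
  assumes p: "prime p" "p \<noteq> 2" and dvd: "p ^ n dvd (x - 1) * (x + 1)"
  shows "p ^ n dvd x - 1 \<or> p ^ n dvd x + 1"
proof -
  have "\<not> (p dvd x - 1 \<and> p dvd x + 1)"
  proof
    assume "p dvd x - 1 \<and> p dvd x + 1"
    then have "p dvd (x + 1) - (x - 1)" by (blast intro: dvd_diff)
    then have "p \<le> 2" by (simp add: zdvd_imp_le)
    then show False using p prime_ge_2_int[of p] by simp
  qed
  then have "coprime (p ^ n) (x - 1) \<or> coprime (p ^ n) (x + 1)"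
    using p by (auto simp: prime_imp_coprime)
  then show ?thesis using dvd by (auto simp: coprime_dvd_mult_left_iff coprime_dvd_mult_right_iff)
qed

lemma cofactor_ne_square_minus_one:
  fixes p k e :: int and n :: nat
  assumes "p \<ge> 2" "k \<ge> 1" "e = 1 \<or> e = -1" "n \<ge> 2"
  shows "k * (k * p ^ n + 2 * e) \<noteq> p\<^sup>2 - 1"
proof
  assume eq: "k * (k * p ^ n + 2 * e) = p\<^sup>2 - 1"
  have "p ^ n \<ge> p\<^sup>2" using assms by (simp add: power_increasing)
  have "p\<^sup>2 \<ge> 4" using \<open>p \<ge> 2\<close> power_mono[of 2 p 2] by simp
  show False
  proof (cases "k = 1")
    case True
    then have eq1: "p ^ n + 2 * e = p\<^sup>2 - 1" using eq by simp
    show False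
    proof (cases "n = 2")
      case True
      then have "2 * e = -1" using eq1 by simp
      then show False by presburger
    next
      case False
      then have "p ^ n \<ge> p ^ 3" using assms by (simp add: power_increasing)
      moreover have "p ^ 3 \<ge> 2 * p\<^sup>2" using assms by (simp add: power3_eq_cube power2_eq_square)
      ultimately show False using eq1 assms(3) \<open>p\<^sup>2 \<ge> 4\<close> by linarith
    qed
  next
    case False
    then have "k \<ge> 2" using assms by simp
    have "k * p ^ n \<ge> k * p\<^sup>2" using assms \<open>p ^ n \<ge> p\<^sup>2\<close> by (simp add: mult_left_mono)
    then have "k * p ^ n + 2 * e \<ge> k * p\<^sup>2 - 2" using assms(3) by linarith
    then have lower: "k * (k * p ^ n + 2 * e) \<ge> k * (k * p\<^sup>2 - 2)"
      using assms by (simp add: mult_left_mono)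
    have kp: "k * p\<^sup>2 - 2 \<ge> 2 * p\<^sup>2 - 2"
      using \<open>k \<ge> 2\<close> by (simp add: mult_right_mono)
    have "k * (k * p\<^sup>2 - 2) \<ge> 2 * (2 * p\<^sup>2 - 2)"
      by (rule mult_mono) (use \<open>k \<ge> 2\<close> \<open>p\<^sup>2 \<ge> 4\<close> kp in linarith)+
    then have "k * (k * p\<^sup>2 - 2) \<ge> 4 * p\<^sup>2 - 4" by simp
    then show False using eq lower \<open>p\<^sup>2 \<ge> 4\<close> by linarith
  qed
qed

lemma cofactor_eq_square_minus_one_exponent_one:
  fixes p k e :: int
  assumes "p \<ge> 2" "k \<ge> 1" and e: "e = 1 \<or> e = -1" and eq: "k * (k * p + 2 * e) = p\<^sup>2 - 1"
  shows "k = 2 \<and> p = 4 + e"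
proof -
  define m where "m = e * (p - k\<^sup>2)"
  have "e * e = 1" using e by auto
  have pm: "p * m = 2 * k + e"
  proof -
    have "p\<^sup>2 - k * k * p = 1 + 2 * e * k" using eq by (simp add: algebra_simps)
    then have "p * m = e * (1 + 2 * e * k)" by (simp add: m_def algebra_simps power2_eq_square)
    also have "\<dots> = 2 * k + e" using \<open>e * e = 1\<close> by (simp add: algebra_simps)
    finally show ?thesis .
  qed
  then have "p * m > 0" using \<open>k \<ge> 1\<close> e by auto
  then have "m > 0" using zero_less_mult_pos[of p m] \<open>p \<ge> 2\<close> by simp
  show ?thesis
  proof (cases "m = 1")
    case True
    then have "p = 2 * k + e" using pm by simp
    moreover have "p - k\<^sup>2 = e" using True \<open>e * e = 1\<close> unfolding m_def by (metis mult.assoc mult_1)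
    ultimately have "k * (k - 2) = 0" by (simp add: algebra_simps power2_eq_square)
    then show ?thesis using \<open>k \<ge> 1\<close> \<open>p = 2 * k + e\<close> by simp
  next
    case False
    then have "p * 2 \<le> p * m" using \<open>m > 0\<close> \<open>p \<ge> 2\<close> by (intro mult_left_mono) auto
    then have "2 * p \<le> 2 * k + e" using pm by simp
    then have "p \<le> k" using e by auto
    then have "p\<^sup>2 \<le> k * p" using \<open>p \<ge> 2\<close> by (simp add: power2_eq_square mult_right_mono)
    moreover have "k * (k * p) \<ge> k * (p + 2)"
    proof -
      have "(k - 1) * p \<ge> 1 * 2" using \<open>p \<le> k\<close> \<open>p \<ge> 2\<close> by (intro mult_mono) auto
      then show ?thesis using \<open>k \<ge> 1\<close> by (intro mult_left_mono) (auto simp: algebra_simps)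
    qed
    ultimately have False using eq e \<open>k \<ge> 1\<close> by (auto simp: algebra_simps)
    then show ?thesis ..
  qed
qed

lemma odd_prime_power_times_square_minus_one_eq_square_minus_one:
  fixes p q a :: nat
  assumes p: "prime p" and q: "prime q" and "p < q" "p \<noteq> 2"
    and eq: "p ^ a * (p\<^sup>2 - 1) = q\<^sup>2 - 1"
  shows "(p = 3 \<and> a = 1 \<and> q = 5) \<or> (p = 5 \<and> a = 1 \<and> q = 11)"
proof -
  have "p \<ge> 2" using p prime_ge_2_nat by blast
  have "int p ^ a * ((int p)\<^sup>2 - 1) = (int q)\<^sup>2 - 1"
    using arg_cong[OF eq, of int] \<open>p < q\<close> \<open>p \<ge> 2\<close> by simp
  then have eq_int: "int p ^ a * ((int p)\<^sup>2 - 1) = (int q - 1) * (int q + 1)"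
    by (simp add: algebra_simps power2_eq_square)
  have "a \<noteq> 0"
  proof
    assume "a = 0"
    then have "(int p)\<^sup>2 = (int q)\<^sup>2" using eq_int by (simp add: algebra_simps power2_eq_square)
    then show False using \<open>p < q\<close> by simp
  qed
  have "int p ^ a dvd int q - 1 \<or> int p ^ a dvd int q + 1"
    using p \<open>p \<noteq> 2\<close> eq_int
    by (intro prime_power_dvd_pred_or_succ) (auto intro: dvdI[OF eq_int[symmetric]])
  then obtain k e where e: "e = 1 \<or> e = -1" and q_eq: "int q = k * int p ^ a + e"
  proof (elim disjE dvdE)
    fix k assume "int q - 1 = int p ^ a * k"
    then show thesis using that[of 1 k] by (simp add: algebra_simps)
  next
    fix k assume "int q + 1 = int p ^ a * k"
    then show thesis using that[of "-1" k] by (simp add: algebra_simps)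
  qed
  have "k \<ge> 1"
  proof (rule ccontr)
    assume "\<not> k \<ge> 1"
    then have "k * int p ^ a \<le> 0" by (simp add: mult_nonpos_nonneg)
    then show False using q_eq e \<open>p < q\<close> \<open>p \<ge> 2\<close> by auto
  qed
  have "int p ^ a * (k * (k * int p ^ a + 2 * e)) = int p ^ a * ((int p)\<^sup>2 - 1)"
    using eq_int e unfolding q_eq by (auto simp: algebra_simps)
  then have eq_k: "k * (k * int p ^ a + 2 * e) = (int p)\<^sup>2 - 1" using \<open>p \<ge> 2\<close> by simp
  then have "a = 1"
    using cofactor_ne_square_minus_one[of "int p" k e a] \<open>p \<ge> 2\<close> \<open>k \<ge> 1\<close> e \<open>a \<noteq> 0\<close>
    by fastforce
  then have "k = 2 \<and> int p = 4 + e"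
    using cofactor_eq_square_minus_one_exponent_one[of "int p" k e] eq_k \<open>p \<ge> 2\<close> \<open>k \<ge> 1\<close> e by simp
  then show ?thesis using q_eq e \<open>a = 1\<close> by auto
qed

lemma prime_power_equation_solutions:
  fixes p q a b :: nat
  assumes p: "prime p" and q: "prime q" and "p < q"
    and eq: "p ^ a * (p\<^sup>2 - 1) = q ^ b * (q\<^sup>2 - 1)"
  shows "(p, a, q, b) \<in> {(2, 3, 3, 1), (2, 3, 5, 0), (2, 4, 7, 0), (3, 1, 5, 0), (5, 1, 11, 0)}"
proof (cases "b = 0")
  case False
  then have "q dvd p ^ a * (p\<^sup>2 - 1)" unfolding eq by simp
  then have "p = 2 \<and> q = 3"
    using distinct_prime_dvd_power_mult_iff[OF q p] \<open>p < q\<close> larger_prime_dvd_square_minus_one[OF p q]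
    by simp
  then have "2 ^ a * 3 ^ 1 = 2 ^ 3 * (3::nat) ^ b" using eq by simp
  then have "a = 3 \<and> 1 = b" by (intro distinct_prime_powers_mult_inject[of 2 3]) simp_all
  then show ?thesis using \<open>p = 2 \<and> q = 3\<close> by auto
next
  case True
  show ?thesis
  proof (cases "p = 2")
    case True
    have "odd q" using q \<open>p < q\<close> \<open>p = 2\<close> prime_odd_nat by blast
    moreover have "2 ^ a * 3 = q\<^sup>2 - 1" using eq \<open>p = 2\<close> \<open>b = 0\<close> by simp
    ultimately show ?thesis using power_of_two_times_three_eq_square_minus_one \<open>p = 2\<close> \<open>b = 0\<close> by auto
  next
    case False
    then show ?thesis
      using odd_prime_power_times_square_minus_one_eq_square_minus_one[OF p q \<open>p < q\<close>] eq \<open>b = 0\<close>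
      by auto
  qed
qed

lemma powi_equation_iff_nat:
  fixes p q a b :: nat
  assumes "p > 0" "q > 0"
  shows "real p powi int a * ((real p)\<^sup>2 - 1) = real q powi int b * ((real q)\<^sup>2 - 1)
    \<longleftrightarrow> p ^ a * (p\<^sup>2 - 1) = q ^ b * (q\<^sup>2 - 1)"
proof -
  have "real (p ^ a * (p\<^sup>2 - 1)) = real (q ^ b * (q\<^sup>2 - 1))
      \<longleftrightarrow> real p ^ a * ((real p)\<^sup>2 - 1) = real q ^ b * ((real q)\<^sup>2 - 1)"
    using assms by (simp only: of_nat_mult of_nat_power of_nat_square_minus_one)
  then show ?thesis by (simp only: of_nat_eq_iff power_int_of_nat)
qed

lemma powi_equation_solutions:
  fixes p q :: nat and a b :: int
  assumes p: "prime p" and q: "prime q" and "p < q"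
    and eq: "real p powi a * ((real p)\<^sup>2 - 1) = real q powi b * ((real q)\<^sup>2 - 1)"
  shows "(p, a, q, b) \<in> {(2, 3, 3, 1), (2, 3, 5, 0), (2, 4, 7, 0), (3, 1, 5, 0), (5, 1, 11, 0)}"
proof -
  have "p \<noteq> q" using \<open>p < q\<close> by simp
  then have "a \<ge> 0" "b \<ge> 0"
    using powi_equation_exponent_nonneg[OF p q _ eq] powi_equation_exponent_nonneg[OF q p _ eq[symmetric]]
    by auto
  then obtain m n :: nat where mn: "a = int m" "b = int n"
    by (metis nonneg_int_cases)
  then have "p ^ m * (p\<^sup>2 - 1) = q ^ n * (q\<^sup>2 - 1)"
    using eq powi_equation_iff_nat[of p q m n] p q by (simp add: prime_gt_0_nat)
  then have "(p, m, q, n) \<in> {(2, 3, 3, 1), (2, 3, 5, 0), (2, 4, 7, 0), (3, 1, 5, 0), (5, 1, 11, 0)}"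
    by (rule prime_power_equation_solutions[OF p q \<open>p < q\<close>])
  then show ?thesis using mn by auto
qed

theorem proposition1:
  "{(p::nat, \<alpha>::int, q::nat, \<beta>::int).
      prime p \<and> prime q \<and> p < q \<and>
      real p powi (\<alpha> - 2) * ((real p)\<^sup>2 - 1) = real q powi (\<beta> - 2) * ((real q)\<^sup>2 - 1)}
   = {(2::nat, 5::int, 3::nat, 3::int), (2, 5, 5, 2), (2, 6, 7, 2), (3, 3, 5, 2), (5, 3, 11, 2)}"
  (is "?L = ?R")
proof
  have "(p, \<alpha>, q, \<beta>) \<in> ?R"
    if "prime p" "prime q" "p < q"
      and "real p powi (\<alpha> - 2) * ((real p)\<^sup>2 - 1) = real q powi (\<beta> - 2) * ((real q)\<^sup>2 - 1)"
    for p q :: nat and \<alpha> \<beta> :: int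
    using powi_equation_solutions[OF that] by auto
  then show "?L \<subseteq> ?R"
    by (intro subsetI, elim CollectE case_prodE conjE, hypsubst)
next
  have "prime (3::nat)" "prime (5::nat)" "prime (7::nat)" "prime (11::nat)"
    by code_simp+
  then show "?R \<subseteq> ?L" by simp
qed

end
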